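(* Let $P$ be a pre-run of vocabulary $\Upsilon_0^+$ satisfying the Train Motion requirement, and let $A$ be an initial state of the railroad ealgebra whose $\Upsilon_0^+$-reduct equals $P(0)$. Then there is exactly one run $Q$ of the one-module program Controller (over vocabulary $\Upsilon_1^+$, with TrackStatus external and Deadline, Dir internal) such that $Q(0)$ is the $\Upsilon_1^+$-reduct of $A$, the $\Upsilon_0^+$-reduct of $Q(t)$ equals $P(t)$ for all $t\ge0$, and Controller is immediate in $Q$.
   Context: Setting (evolving algebra for the railroad crossing). States are structures over a vocabulary $\Upsilon\cup\{\mathrm{CT}\}$ where $\Upsilon$ contains: a finite universe Tracks; the reals and ExtendedReals $=\mathbb{R}\cup\{\infty\}$ with standard $<$ and $+$ ($\infty$ largest); positive real constants $d_{close},d_{open},d_{min},d_{max}$ with $d_{close}<d_{min}\le d_{max}$; a unary function TrackStatus from Tracks to $\{\text{empty},\text{coming},\text{incrossing}\}$; a unary function Deadline from Tracks to ExtendedReals; a nullary Dir with values in $\{\text{open},\text{close}\}$; a nullary GateStatus with values in $\{\text{opened},\text{closed}\}$; and $\mathrm{CT}$ is a nullary real-valued symbol (current time). Let $\Upsilon_1=\Upsilon\setminus\{\mathrm{GateStatus}\}$, $\Upsilon_0=\Upsilon_1\setminus\{\mathrm{Deadline},\mathrm{Dir}\}$, and $\Upsilon_i^+=\Upsilon_i\cup\{\mathrm{CT}\}$. Put $W=d_{min}-d_{close}$. For a track $x$, SafeToOpen is $\forall x\in\mathrm{Tracks}$ [$\mathrm{TrackStatus}(x)=\text{empty}$ or $\mathrm{CT}+d_{open}<\mathrm{Deadline}(x)$].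 The module Controller executes simultaneously, for every track $x$, SetDeadline$(x)$ "if TrackStatus$(x)$=coming and Deadline$(x)=\infty$ then Deadline$(x):=\mathrm{CT}+W$", SignalClose$(x)$ "if $\mathrm{CT}=$Deadline$(x)$ then Dir:=close", ClearDeadline$(x)$ "if TrackStatus$(x)$=empty and Deadline$(x)<\infty$ then Deadline$(x):=\infty$", together with SignalOpen "if Dir=close and SafeToOpen then Dir:=open". Executing it means computing all updates generated in the current state and performing them simultaneously (nothing happens if inconsistent). It is enabled at a state if its update set is consistent and contains an update that changes the state. Runs: for a map $t\mapsto R(t)$, $t\in[0,\infty)$, to states of a vocabulary $V\cup\{\mathrm{CT}\}$, let $\rho(t)$ be the reduct to $V$. $R$ is a pre-run if all $R(t)$ share a superuniverse, $\mathrm{CT}=t$ in $R(t)$, and for every $\tau>0$ there are $0=t_0<\dots<t_n=\tau$ with $\rho$ constant on each $(t_i,t_{i+1})$; $\rho(t+)$, $\rho(t-)$ are the one-sided constant values. A pre-run is a run of a program if (i) whenever $\rho(t+)\neq\rho(t)$, $\rho(t+)$ is the $V$-reduct of the result of executing some of its modules at $R(t)$ (these fire at $t$), with external functions equal in $\rho(t)$ and $\rho(t+)$; (ii) whenever $t>0$ and $\rho(t)\ne\rho(t-)$, they differ only in external functions. An agent is immediate if it fires at every moment at which it is enabled. Initial states: TrackStatus$(x)$=empty and Deadline$(x)=\infty$ for every track $x$. Train Motion requirement for $P$: for each track $x$ there is a finite or infinite sequence $0=t_0<t_1<t_2<\cdots$ with TrackStatus$(x)$=empty over each $[t_{3i},t_{3i+1})$,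 =coming over each $[t_{3i+1},t_{3i+2})$ where $d_{min}\le t_{3i+2}-t_{3i+1}\le d_{max}$, =incrossing over each $[t_{3i+2},t_{3i+3})$, and, if the sequence is finite with last element $t_k$, then $3\mid k$ and TrackStatus$(x)$=empty over $[t_k,\infty)$. *)

theory Defs
  imports Main "HOL.Real"
begin

datatype tstatus = Empty | Coming | Incrossing
datatype dirv = DOpen | DClose
datatype gstatus = Opened | Closed

datatype xreal = Fin real | Infty

fun xless :: "xreal \<Rightarrow> xreal \<Rightarrow> bool" where
  "xless (Fin a) (Fin b) = (a < b)"
| "xless (Fin a) Infty = True"
| "xless Infty _ = False"

text \<open>States of vocabulary Upsilon_1 (without CT; CT is the time argument of a run).
  Tracks is the finite type 'tr; the static part (reals, constants d_close etc.)
  is given by fixed parameters.\<close>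
record 'tr st1 =
  ts :: "'tr \<Rightarrow> tstatus"
  dl :: "'tr \<Rightarrow> xreal"
  dr :: dirv

record 'tr stfull = "'tr st1" +
  gate :: gstatus
  ct :: real

datatype 'tr loc = LDeadline 'tr | LDir
datatype val = VX xreal | VD dirv

definition loc_val :: "'tr st1 \<Rightarrow> 'tr loc \<Rightarrow> val" where
  "loc_val s l = (case l of LDeadline x \<Rightarrow> VX (dl s x) | LDir \<Rightarrow> VD (dr s))"

definition safe_to_open :: "real \<Rightarrow> 'tr st1 \<Rightarrow> real \<Rightarrow> bool" where
  "safe_to_open d_open s CT = (\<forall>x. ts s x = Empty \<or> xless (Fin (CT + d_open)) (dl s x))"

definition ctrl_updates :: "real \<Rightarrow> real \<Rightarrow> 'tr st1 \<Rightarrow> real \<Rightarrow> ('tr loc \<times> val) set" where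
  "ctrl_updates W d_open s CT =
     {(LDeadline x, VX (Fin (CT + W))) | x. ts s x = Coming \<and> dl s x = Infty}
   \<union> {(LDir, VD DClose) | x. Fin CT = dl s x}
   \<union> {(LDeadline x, VX Infty) | x. ts s x = Empty \<and> xless (dl s x) Infty}
   \<union> (if dr s = DClose \<and> safe_to_open d_open s CT then {(LDir, VD DOpen)} else {})"

definition consistent :: "('tr loc \<times> val) set \<Rightarrow> bool" where
  "consistent U = (\<forall>l v w. (l, v) \<in> U \<longrightarrow> (l, w) \<in> U \<longrightarrow> v = w)"

definition apply_updates :: "('tr loc \<times> val) set \<Rightarrow> 'tr st1 \<Rightarrow> 'tr st1" where
  "apply_updates U s = s\<lparr>
     dl := (\<lambda>x. if \<exists>v. (LDeadline x, v) \<in> U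
                then (case (SOME v. (LDeadline x, v) \<in> U) of VX e \<Rightarrow> e | VD _ \<Rightarrow> dl s x)
                else dl s x),
     dr := (if \<exists>v. (LDir, v) \<in> U
            then (case (SOME v. (LDir, v) \<in> U) of VD d \<Rightarrow> d | VX _ \<Rightarrow> dr s)
            else dr s)\<rparr>"

definition exec_upd :: "('tr loc \<times> val) set \<Rightarrow> 'tr st1 \<Rightarrow> 'tr st1" where
  "exec_upd U s = (if consistent U then apply_updates U s else s)"

definition enabled :: "('tr loc \<times> val) set \<Rightarrow> 'tr st1 \<Rightarrow> bool" where
  "enabled U s = (consistent U \<and> (\<exists>(l, v) \<in> U. loc_val s l \<noteq> v))"

definition ctrl_exec :: "real \<Rightarrow> real \<Rightarrow> 'tr st1 \<Rightarrow> real \<Rightarrow> 'tr st1" where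
  "ctrl_exec W d_open s CT = exec_upd (ctrl_updates W d_open s CT) s"

definition ctrl_enabled :: "real \<Rightarrow> real \<Rightarrow> 'tr st1 \<Rightarrow> real \<Rightarrow> bool" where
  "ctrl_enabled W d_open s CT = enabled (ctrl_updates W d_open s CT) s"

text \<open>A pre-run is represented by its reduct rho (CT = t is implicit); only t >= 0 matters.\<close>
definition pre_run :: "(real \<Rightarrow> 'a) \<Rightarrow> bool" where
  "pre_run \<rho> = (\<forall>\<tau>>0. \<exists>(n::nat) (t::nat \<Rightarrow> real). t 0 = 0 \<and> t n = \<tau> \<and>
      (\<forall>i<n. t i < t (Suc i)) \<and>
      (\<forall>i<n. \<exists>v. \<forall>s. t i < s \<and> s < t (Suc i) \<longrightarrow> \<rho> s = v))"

definition right_val :: "(real \<Rightarrow> 'a) \<Rightarrow> real \<Rightarrow> 'a" where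
  "right_val \<rho> t = (THE v. \<exists>e>0. \<forall>s. t < s \<and> s < t + e \<longrightarrow> \<rho> s = v)"

definition left_val :: "(real \<Rightarrow> 'a) \<Rightarrow> real \<Rightarrow> 'a" where
  "left_val \<rho> t = (THE v. \<exists>e>0. \<forall>s. t - e < s \<and> s < t \<longrightarrow> \<rho> s = v)"

text \<open>Run of the one-module program Controller; TrackStatus external, Deadline and Dir internal.\<close>
definition is_ctrl_run :: "real \<Rightarrow> real \<Rightarrow> (real \<Rightarrow> 'tr st1) \<Rightarrow> bool" where
  "is_ctrl_run W d_open Q = (pre_run Q \<and>
     (\<forall>t\<ge>0. right_val Q t \<noteq> Q t \<longrightarrow>
        right_val Q t = ctrl_exec W d_open (Q t) t \<and> ts (right_val Q t) = ts (Q t)) \<and>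
     (\<forall>t>0. Q t \<noteq> left_val Q t \<longrightarrow>
        dl (Q t) = dl (left_val Q t) \<and> dr (Q t) = dr (left_val Q t)))"

definition ctrl_immediate :: "real \<Rightarrow> real \<Rightarrow> (real \<Rightarrow> 'tr st1) \<Rightarrow> bool" where
  "ctrl_immediate W d_open Q = (\<forall>t\<ge>0. ctrl_enabled W d_open (Q t) t \<longrightarrow>
      right_val Q t = ctrl_exec W d_open (Q t) t)"

text \<open>K = None: infinite sequence; K = Some k: finite sequence t_0,...,t_k.\<close>
definition train_motion :: "real \<Rightarrow> real \<Rightarrow> (real \<Rightarrow> 'tr \<Rightarrow> tstatus) \<Rightarrow> bool" where
  "train_motion d_min d_max P = (\<forall>x. \<exists>(t::nat \<Rightarrow> real) (K::nat option).
     (let idx = (\<lambda>i. case K of None \<Rightarrow> True | Some k \<Rightarrow> i \<le> k) in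
      t 0 = 0 \<and>
      (\<forall>i. idx (Suc i) \<longrightarrow> t i < t (Suc i)) \<and>
      (\<forall>i. idx (3*i+1) \<longrightarrow> (\<forall>s. t (3*i) \<le> s \<and> s < t (3*i+1) \<longrightarrow> P s x = Empty)) \<and>
      (\<forall>i. idx (3*i+2) \<longrightarrow> (\<forall>s. t (3*i+1) \<le> s \<and> s < t (3*i+2) \<longrightarrow> P s x = Coming) \<and>
                            d_min \<le> t (3*i+2) - t (3*i+1) \<and> t (3*i+2) - t (3*i+1) \<le> d_max) \<and>
      (\<forall>i. idx (3*i+3) \<longrightarrow> (\<forall>s. t (3*i+2) \<le> s \<and> s < t (3*i+3) \<longrightarrow> P s x = Incrossing)) \<and>
      (\<forall>k. K = Some k \<longrightarrow> 3 dvd k \<and> (\<forall>s. t k \<le> s \<longrightarrow> P s x = Empty))))"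

definition initial_state :: "('tr, 'z) stfull_scheme \<Rightarrow> bool" where
  "initial_state A = (\<forall>x. ts A x = Empty \<and> dl A x = Infty)"

end

theory Submission
  imports Defs Complex_Main
begin

text \<open>
  Along each track the Train Motion sequence fixes the phase at every
  time, and the Deadline of the track is \<open>\<infinity>\<close> while the track is empty and \<open>c + W\<close> while the
  train that became Coming at time \<open>c\<close> is on it. Dir is a latch: it is Close at \<open>u > 0\<close> iff some
  deadline was reached at a time before \<open>u\<close> and it has not been safe to open since. As Coming
  lasts at least \<open>d_min > W\<close>, a deadline is reached only while its train is Coming, so SignalClose
  and SignalOpen never conflict; every ingredient is locally constant on both sides of each time,
  and its right limit is what the Controller produces, so the construction is an immediate run.
  Uniqueness holds for any two immediate runs: at the infimum of the times where they differ, equal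
  left limits and equal TrackStatus force equality, and then immediacy forces equal right limits.
\<close>

section \<open>One-sided values and pre-runs\<close>

lemma eventually_at_right_iff_interval:
  "(\<forall>\<^sub>F s in at_right t. Q s) \<longleftrightarrow> (\<exists>e>0. \<forall>s. t < s \<and> s < t + e \<longrightarrow> Q s)" for t :: real
  unfolding eventually_at_right_field
proof safe
  fix b assume "t < b" "\<forall>s>t. s < b \<longrightarrow> Q s"
  then show "\<exists>e>0. \<forall>s. t < s \<and> s < t + e \<longrightarrow> Q s" by (intro exI[of _ "b - t"]) auto
next
  fix e :: real assume "0 < e" "\<forall>s. t < s \<and> s < t + e \<longrightarrow> Q s"
  then show "\<exists>b>t. \<forall>s>t. s < b \<longrightarrow> Q s" by (intro exI[of _ "t + e"]) auto
qed

lemma eventually_at_left_iff_interval: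
  "(\<forall>\<^sub>F s in at_left t. Q s) \<longleftrightarrow> (\<exists>e>0. \<forall>s. t - e < s \<and> s < t \<longrightarrow> Q s)" for t :: real
  unfolding eventually_at_left_field
proof safe
  fix b assume "b < t" "\<forall>s>b. s < t \<longrightarrow> Q s"
  then show "\<exists>e>0. \<forall>s. t - e < s \<and> s < t \<longrightarrow> Q s" by (intro exI[of _ "t - b"]) auto
next
  fix e :: real assume "0 < e" "\<forall>s. t - e < s \<and> s < t \<longrightarrow> Q s"
  then show "\<exists>b<t. \<forall>s>b. s < t \<longrightarrow> Q s" by (intro exI[of _ "t - e"]) auto
qed

lemma eventually_eq_const_unique:
  assumes "F \<noteq> bot" "\<forall>\<^sub>F s in F. f s = v" "\<forall>\<^sub>F s in F. f s = w"
  shows "v = w"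
  using eventually_happens'[OF assms(1) eventually_conj[OF assms(2,3)]] by auto

lemma right_val_eqI:
  assumes "\<forall>\<^sub>F s in at_right t. f s = v"
  shows "right_val f t = v"
  unfolding right_val_def eventually_at_right_iff_interval[symmetric]
  using assms eventually_eq_const_unique[of "at_right t" f] by (intro the_equality) auto

lemma left_val_eqI:
  assumes "\<forall>\<^sub>F s in at_left t. f s = v"
  shows "left_val f t = v"
  unfolding left_val_def eventually_at_left_iff_interval[symmetric]
  using assms eventually_eq_const_unique[of "at_left t" f] by (intro the_equality) auto

lemma pre_run_eventually_right_val:
  assumes "pre_run \<rho>" "0 \<le> t"
  shows "\<forall>\<^sub>F s in at_right t. \<rho> s = right_val \<rho> t"
proof -
  obtain n T where T: "T 0 = 0" "T n = t + 1"
    and const: "\<forall>i<n. \<exists>v. \<forall>s. T i < s \<and> s < T (Suc i) \<longrightarrow> \<rho> s = v"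
    using assms(1)[unfolded pre_run_def, rule_format, of "t + 1"] assms(2) by auto
  obtain k where "k < n" "T k \<le> t" "t < T (Suc k)"
    using ex_least_nat_less[of "\<lambda>i. t < T i" n] T assms(2) by auto
  moreover obtain v where "\<forall>s. T k < s \<and> s < T (Suc k) \<longrightarrow> \<rho> s = v"
    using const \<open>k < n\<close> by blast
  ultimately have "\<forall>\<^sub>F s in at_right t. \<rho> s = v"
    by (intro eventually_at_rightI[of t "T (Suc k)"]) auto
  moreover from this have "right_val \<rho> t = v" by (rule right_val_eqI)
  ultimately show ?thesis by simp
qed

lemma pre_run_eventually_left_val:
  assumes "pre_run \<rho>" "0 < t"
  shows "\<forall>\<^sub>F s in at_left t. \<rho> s = left_val \<rho> t"
proof -
  obtain n T where T: "T 0 = 0" "T n = t"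
    and const: "\<forall>i<n. \<exists>v. \<forall>s. T i < s \<and> s < T (Suc i) \<longrightarrow> \<rho> s = v"
    using assms(1)[unfolded pre_run_def, rule_format, OF assms(2)] by auto
  obtain k where "k < n" "T k < t" "t \<le> T (Suc k)"
    using ex_least_nat_less[of "\<lambda>i. t \<le> T i" n] T assms(2) by auto
  moreover obtain v where "\<forall>s. T k < s \<and> s < T (Suc k) \<longrightarrow> \<rho> s = v"
    using const \<open>k < n\<close> by blast
  ultimately have "\<forall>\<^sub>F s in at_left t. \<rho> s = v"
    by (intro eventually_at_leftI[of "T k"]) auto
  moreover from this have "left_val \<rho> t = v" by (rule left_val_eqI)
  ultimately show ?thesis by simp
qed

definition pre_run_upto :: "(real \<Rightarrow> 'a) \<Rightarrow> real \<Rightarrow> bool" where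
  "pre_run_upto \<rho> \<tau> = (\<exists>(n::nat) (T::nat \<Rightarrow> real). T 0 = 0 \<and> T n = \<tau> \<and>
      (\<forall>i<n. T i < T (Suc i)) \<and>
      (\<forall>i<n. \<exists>v. \<forall>s. T i < s \<and> s < T (Suc i) \<longrightarrow> \<rho> s = v))"

lemma pre_run_upto_0: "pre_run_upto \<rho> 0"
  unfolding pre_run_upto_def by (rule exI[of _ 0]) auto

lemma pre_run_upto_extend:
  assumes "pre_run_upto \<rho> a" "a < b" "\<forall>s. a < s \<and> s < b \<longrightarrow> \<rho> s = v"
  shows "pre_run_upto \<rho> b"
proof -
  obtain n T where T: "T 0 = 0" "T n = a" "\<forall>i<n. T i < T (Suc i)"
    "\<forall>i<n. \<exists>v. \<forall>s. T i < s \<and> s < T (Suc i) \<longrightarrow> \<rho> s = v"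
    using assms(1) unfolding pre_run_upto_def by blast
  let ?T = "T(Suc n := b)"
  have "?T 0 = 0" "?T (Suc n) = b" "\<forall>i<Suc n. ?T i < ?T (Suc i)"
    "\<forall>i<Suc n. \<exists>v. \<forall>s. ?T i < s \<and> s < ?T (Suc i) \<longrightarrow> \<rho> s = v"
    using T assms(2,3) by (auto simp: less_Suc_eq)
  then show ?thesis unfolding pre_run_upto_def by blast
qed

lemma pre_runI:
  assumes right: "\<And>t. 0 \<le> t \<Longrightarrow> \<exists>v. \<forall>\<^sub>F s in at_right t. \<rho> s = v"
    and left: "\<And>t. 0 < t \<Longrightarrow> \<exists>v. \<forall>\<^sub>F s in at_left t. \<rho> s = v"
  shows "pre_run \<rho>"
  unfolding pre_run_def pre_run_upto_def[symmetric]
proof (intro allI impI)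
  fix \<tau> :: real assume "0 < \<tau>"
  define G where "G = {a. 0 \<le> a \<and> a \<le> \<tau> \<and> pre_run_upto \<rho> a}"
  define b where "b = Sup G"
  have "0 \<in> G" using \<open>0 < \<tau>\<close> pre_run_upto_0 unfolding G_def by auto
  have bdd: "bdd_above G" unfolding G_def by (auto intro: bdd_aboveI[of _ \<tau>])
  have upper: "a \<le> b" if "a \<in> G" for a
    unfolding b_def using that bdd by (rule cSup_upper)
  have "0 \<le> b" "b \<le> \<tau>"
    using upper[OF \<open>0 \<in> G\<close>] \<open>0 \<in> G\<close> unfolding b_def by (auto simp: G_def intro!: cSup_least)
  have "pre_run_upto \<rho> b"
  proof (cases "b = 0")
    case True then show ?thesis using pre_run_upto_0 by simp
  next
    case False
    then obtain v e where "e > 0" and v: "\<forall>s. b - e < s \<and> s < b \<longrightarrow> \<rho> s = v"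
      using left[of b] \<open>0 \<le> b\<close> unfolding eventually_at_left_iff_interval by auto
    then obtain a where "a \<in> G" "b - e < a"
      using less_cSup_iff[OF _ bdd, of "b - e"] \<open>0 \<in> G\<close> \<open>e > 0\<close> unfolding b_def by auto
    then show ?thesis
      using upper[of a] pre_run_upto_extend[of \<rho> a b v] v
      by (cases "a = b") (auto simp: G_def)
  qed
  moreover have "b = \<tau>"
  proof (rule ccontr)
    assume "b \<noteq> \<tau>"
    obtain v e where "e > 0" and v: "\<forall>s. b < s \<and> s < b + e \<longrightarrow> \<rho> s = v"
      using right[of b] \<open>0 \<le> b\<close> unfolding eventually_at_right_iff_interval by auto
    define c where "c = b + min e (\<tau> - b) / 2"
    have "b < c" "c \<le> \<tau>" "c < b + e"
      using \<open>e > 0\<close> \<open>b \<le> \<tau>\<close> \<open>b \<noteq> \<tau>\<close> unfolding c_def by (auto simp: min_def field_simps)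
    then have "c \<in> G"
      using pre_run_upto_extend[OF \<open>pre_run_upto \<rho> b\<close> \<open>b < c\<close>, of v] v \<open>0 \<le> b\<close>
      unfolding G_def by auto
    then show False using upper[of c] \<open>b < c\<close> by simp
  qed
  ultimately show "pre_run_upto \<rho> \<tau>" by simp
qed

lemma pre_run_eqI:
  assumes "pre_run Q1" "pre_run Q2" "Q1 0 = Q2 0"
    and right: "\<And>t. 0 \<le> t \<Longrightarrow> Q1 t = Q2 t \<Longrightarrow> right_val Q1 t = right_val Q2 t"
    and left: "\<And>t. 0 < t \<Longrightarrow> left_val Q1 t = left_val Q2 t \<Longrightarrow> Q1 t = Q2 t"
    and "0 \<le> t"
  shows "Q1 t = Q2 t"
proof (rule ccontr)
  assume "Q1 t \<noteq> Q2 t"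
  define S where "S = {t. 0 \<le> t \<and> Q1 t \<noteq> Q2 t}"
  define a where "a = Inf S"
  have "S \<noteq> {}" using \<open>Q1 t \<noteq> Q2 t\<close> \<open>0 \<le> t\<close> unfolding S_def by auto
  have bdd: "bdd_below S" unfolding S_def by (auto intro: bdd_belowI[of _ 0])
  have "0 \<le> a" unfolding a_def S_def using \<open>S \<noteq> {}\<close> by (intro cInf_greatest) (auto simp: S_def)
  have below: "Q1 s = Q2 s" if "0 \<le> s" "s < a" for s
    using cInf_lower[OF _ bdd, of s] that unfolding a_def S_def by auto
  show False
  proof (cases "Q1 a = Q2 a")
    case False
    then have "0 < a" using \<open>0 \<le> a\<close> \<open>Q1 0 = Q2 0\<close> by (cases "a = 0") auto
    have "\<forall>\<^sub>F s in at_left a. Q1 s = left_val Q1 a \<and> Q2 s = left_val Q2 a \<and> 0 < s \<and> s < a"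
      using pre_run_eventually_left_val[OF assms(1) \<open>0 < a\<close>]
        pre_run_eventually_left_val[OF assms(2) \<open>0 < a\<close>]
        eventually_at_left_real[OF \<open>0 < a\<close>] by eventually_elim auto
    then have "\<forall>\<^sub>F s in at_left a. left_val Q1 a = left_val Q2 a"
      by eventually_elim (use below in auto)
    then have "Q1 a = Q2 a" using left[OF \<open>0 < a\<close>] by simp
    then show False using False by simp
  next
    case True
    have "\<forall>\<^sub>F s in at_right a. Q1 s = Q2 s"
      using pre_run_eventually_right_val[OF assms(1) \<open>0 \<le> a\<close>]
        pre_run_eventually_right_val[OF assms(2) \<open>0 \<le> a\<close>]
      by eventually_elim (use right[OF \<open>0 \<le> a\<close> True] in simp)
    then obtain e where "e > 0" and agree: "\<forall>s. a < s \<and> s < a + e \<longrightarrow> Q1 s = Q2 s"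
      unfolding eventually_at_right_iff_interval by blast
    have "a + e \<le> Inf S"
    proof (rule cInf_greatest[OF \<open>S \<noteq> {}\<close>])
      fix s assume "s \<in> S"
      then have "0 \<le> s" "Q1 s \<noteq> Q2 s" unfolding S_def by auto
      show "a + e \<le> s"
      proof (rule ccontr)
        assume "\<not> a + e \<le> s"
        then show False
          using below[of s] agree[rule_format, of s] True \<open>0 \<le> s\<close> \<open>Q1 s \<noteq> Q2 s\<close>
          by (cases s a rule: linorder_cases) auto
      qed
    qed
    then show False using \<open>e > 0\<close> unfolding a_def by simp
  qed
qed

section \<open>Executing the Controller\<close>

lemma some_update_value: "consistent U \<Longrightarrow> (l, v) \<in> U \<Longrightarrow> (SOME v. (l, v) \<in> U) = v"
  unfolding consistent_def by (blast intro: someI)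

lemma dl_apply_updates:
  "consistent U \<Longrightarrow> (LDeadline x, VX e) \<in> U \<Longrightarrow> dl (apply_updates U s) x = e"
  "(\<And>v. (LDeadline x, v) \<notin> U) \<Longrightarrow> dl (apply_updates U s) x = dl s x"
  by (auto simp: apply_updates_def some_update_value)

lemma dr_apply_updates:
  "consistent U \<Longrightarrow> (LDir, VD d) \<in> U \<Longrightarrow> dr (apply_updates U s) = d"
  "(\<And>v. (LDir, v) \<notin> U) \<Longrightarrow> dr (apply_updates U s) = dr s"
  by (auto simp: apply_updates_def some_update_value)

lemma exec_upd_not_enabled:
  assumes "\<not> enabled U s"
  shows "exec_upd U s = s"
proof (cases "consistent U")
  case True
  then have trivial: "loc_val s l = v" if "(l, v) \<in> U" for l v
    using assms that unfolding enabled_def by auto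
  have "dl (apply_updates U s) x = dl s x" for x
    using dl_apply_updates(1)[OF True, of x _ s] dl_apply_updates(2)[of x U s]
      trivial[of "LDeadline x"] by (auto simp: loc_val_def)
  moreover have "dr (apply_updates U s) = dr s"
    using dr_apply_updates(1)[OF True, of _ s] dr_apply_updates(2)[of U s]
      trivial[of LDir] by (auto simp: loc_val_def)
  ultimately show ?thesis
    using True by (auto simp: exec_upd_def apply_updates_def intro: st1.equality)
qed (simp add: exec_upd_def)

lemma ts_ctrl_exec [simp]: "ts (ctrl_exec W d s CT) = ts s"
  unfolding ctrl_exec_def exec_upd_def apply_updates_def by simp

lemma ctrl_run_right_val:
  assumes "is_ctrl_run W d Q" "ctrl_immediate W d Q" "0 \<le> t"
  shows "right_val Q t = ctrl_exec W d (Q t) t"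
proof (cases "ctrl_enabled W d (Q t) t")
  case False
  then have "ctrl_exec W d (Q t) t = Q t"
    unfolding ctrl_exec_def ctrl_enabled_def by (rule exec_upd_not_enabled)
  then show ?thesis using assms(1,3) unfolding is_ctrl_run_def by metis
qed (use assms in \<open>simp add: ctrl_immediate_def\<close>)

lemma ctrl_run_eq_left_val:
  assumes "is_ctrl_run W d Q" "0 < t"
  shows "Q t = (left_val Q t)\<lparr>ts := ts (Q t)\<rparr>"
  using assms unfolding is_ctrl_run_def by (cases "Q t = left_val Q t") (auto intro: st1.equality)

lemma ctrl_run_unique:
  assumes "is_ctrl_run W d Q1" "ctrl_immediate W d Q1"
    and "is_ctrl_run W d Q2" "ctrl_immediate W d Q2"
    and "Q1 0 = Q2 0" "\<And>t. 0 \<le> t \<Longrightarrow> ts (Q1 t) = ts (Q2 t)" "0 \<le> t"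
  shows "Q1 t = Q2 t"
proof (rule pre_run_eqI[of Q1 Q2])
  show "pre_run Q1" "pre_run Q2" using assms(1,3) unfolding is_ctrl_run_def by simp_all
  show "right_val Q1 t = right_val Q2 t" if "0 \<le> t" "Q1 t = Q2 t" for t
    using that ctrl_run_right_val assms(1-4) by metis
  show "Q1 t = Q2 t" if "0 < t" "left_val Q1 t = left_val Q2 t" for t
    using that ctrl_run_eq_left_val assms(1,3,6) by (metis less_imp_le)
qed (use assms in auto)

text \<open>The deadline update of SetDeadline and ClearDeadline for one track; clearing an infinite
  deadline changes nothing, so an empty track always gets \<open>Infty\<close>.\<close>

definition next_deadline :: "real \<Rightarrow> tstatus \<Rightarrow> xreal \<Rightarrow> real \<Rightarrow> xreal" where
  "next_deadline W st d CT =
     (if st = Empty then Infty else if st = Coming \<and> d = Infty then Fin (CT + W) else d)"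

lemma deadline_update_mem_ctrl_updates:
  "(LDeadline x, v) \<in> ctrl_updates W d s CT \<longleftrightarrow>
     ts s x = Coming \<and> dl s x = Infty \<and> v = VX (Fin (CT + W)) \<or>
     ts s x = Empty \<and> dl s x \<noteq> Infty \<and> v = VX Infty"
  by (cases "dl s x") (auto simp: ctrl_updates_def)

lemma dir_update_mem_ctrl_updates:
  "(LDir, v) \<in> ctrl_updates W d s CT \<longleftrightarrow>
     (\<exists>x. dl s x = Fin CT) \<and> v = VD DClose \<or>
     dr s = DClose \<and> safe_to_open d s CT \<and> v = VD DOpen"
  by (auto simp: ctrl_updates_def eq_commute[of "Fin CT"])

lemma ctrl_exec_eq:
  assumes "\<not> ((\<exists>x. dl s x = Fin CT) \<and> dr s = DClose \<and> safe_to_open d s CT)"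
  shows "ctrl_exec W d s CT = s\<lparr>dl := \<lambda>x. next_deadline W (ts s x) (dl s x) CT,
    dr := if \<exists>x. dl s x = Fin CT then DClose else if safe_to_open d s CT then DOpen else dr s\<rparr>"
proof -
  let ?U = "ctrl_updates W d s CT"
  have "consistent ?U"
    unfolding consistent_def
  proof (intro allI impI)
    fix l v w assume "(l, v) \<in> ?U" "(l, w) \<in> ?U"
    then show "v = w"
      using assms by (cases l) (auto simp: deadline_update_mem_ctrl_updates dir_update_mem_ctrl_updates)
  qed
  have "dl (apply_updates ?U s) x = next_deadline W (ts s x) (dl s x) CT" for x
    using dl_apply_updates(1)[OF \<open>consistent ?U\<close>, of x _ s] dl_apply_updates(2)[of x ?U s]
    by (cases "ts s x"; cases "dl s x")
       (auto simp: deadline_update_mem_ctrl_updates next_deadline_def)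
  moreover have "dr (apply_updates ?U s) =
      (if \<exists>x. dl s x = Fin CT then DClose else if safe_to_open d s CT then DOpen else dr s)"
    using dr_apply_updates(1)[OF \<open>consistent ?U\<close>, of _ s] dr_apply_updates(2)[of ?U s] assms
    by (cases "dr s") (auto simp: dir_update_mem_ctrl_updates)
  ultimately show ?thesis
    using \<open>consistent ?U\<close>
    by (auto simp: ctrl_exec_def exec_upd_def apply_updates_def intro: st1.equality)
qed

section \<open>Deadlines along one track\<close>

definition seq_index :: "nat option \<Rightarrow> nat \<Rightarrow> bool" where
  "seq_index K i = (case K of None \<Rightarrow> True | Some k \<Rightarrow> i \<le> k)"

definition phase :: "nat \<Rightarrow> tstatus" where
  "phase j = (if j mod 3 = 0 then Empty else if j mod 3 = 1 then Coming else Incrossing)"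

locale track_motion =
  fixes t :: "nat \<Rightarrow> real" and K :: "nat option" and st :: "real \<Rightarrow> tstatus" and W d_min :: real
  assumes d_min_pos: "0 < d_min" and W_less_d_min: "W < d_min"
    and t_0: "t 0 = 0"
    and t_less_Suc: "\<And>i. seq_index K (Suc i) \<Longrightarrow> t i < t (Suc i)"
    and empty: "\<And>i s. seq_index K (3*i+1) \<Longrightarrow> t (3*i) \<le> s \<Longrightarrow> s < t (3*i+1) \<Longrightarrow> st s = Empty"
    and coming: "\<And>i s. seq_index K (3*i+2) \<Longrightarrow> t (3*i+1) \<le> s \<Longrightarrow> s < t (3*i+2) \<Longrightarrow> st s = Coming"
    and coming_long: "\<And>i. seq_index K (3*i+2) \<Longrightarrow> d_min \<le> t (3*i+2) - t (3*i+1)"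
    and crossing: "\<And>i s. seq_index K (3*i+3) \<Longrightarrow> t (3*i+2) \<le> s \<Longrightarrow> s < t (3*i+3) \<Longrightarrow> st s = Incrossing"
    and last_dvd: "\<And>k. K = Some k \<Longrightarrow> 3 dvd k"
    and empty_after_last: "\<And>k s. K = Some k \<Longrightarrow> t k \<le> s \<Longrightarrow> st s = Empty"
begin

lemma seq_index_le: "seq_index K j \<Longrightarrow> i \<le> j \<Longrightarrow> seq_index K i"
  unfolding seq_index_def by (cases K) auto

lemma seq_index_0 [simp]: "seq_index K 0"
  unfolding seq_index_def by (cases K) auto

lemma seq_index_Suc:
  assumes "seq_index K j" "\<not> 3 dvd j"
  shows "seq_index K (Suc j)"
proof (cases K)
  case (Some k)
  then have "j \<noteq> k" using assms(2) last_dvd by auto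
  then show ?thesis using Some assms(1) by (simp add: seq_index_def)
qed (simp add: seq_index_def)

lemma t_strict_mono: "seq_index K j \<Longrightarrow> i < j \<Longrightarrow> t i < t j"
proof (induction j)
  case (Suc j)
  then show ?case
    using t_less_Suc[of j] seq_index_le[of "Suc j" j] by (cases "i = j") (auto simp: less_Suc_eq)
qed simp

lemma t_mono: "seq_index K j \<Longrightarrow> i \<le> j \<Longrightarrow> t i \<le> t j"
  using t_strict_mono by (cases "i = j") (auto simp: order_less_imp_le)

lemma status_between:
  assumes "seq_index K (Suc j)" "t j \<le> s" "s < t (Suc j)"
  shows "st s = phase j"
proof -
  have "\<exists>i. j = 3*i \<or> j = 3*i+1 \<or> j = 3*i+2" by presburger
  then obtain i where "j = 3*i \<or> j = 3*i+1 \<or> j = 3*i+2" by blast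
  then consider "j = 3*i" | "j = 3*i+1" | "j = 3*i+2" by blast
  then show ?thesis
  proof cases
    case 1
    then have "st s = Empty" using empty[of i s] assms by simp
    then show ?thesis using 1 by (simp add: phase_def)
  next
    case 2
    then have "st s = Coming" using coming[of i s] assms by simp
    then show ?thesis using 2 by (simp add: phase_def mod_Suc)
  next
    case 3
    moreover have "Suc (3*i+2) = 3*i+3" by simp
    ultimately have "st s = Incrossing" using crossing[of i s] assms by metis
    then show ?thesis using 3 by (simp add: phase_def mod_Suc)
  qed
qed

lemma t_growth: "seq_index K (3*i) \<Longrightarrow> real i * d_min \<le> t (3*i)"
proof (induction i)
  case (Suc i)
  have "seq_index K (3*i+3)" using Suc.prems by (simp add: add.commute)
  then have "seq_index K (3*i+2)" "seq_index K (3*i+1)" "seq_index K (3*i)"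
    using seq_index_le by auto
  have "t (3*i) < t (3*i+1)"
    using t_less_Suc[of "3*i"] \<open>seq_index K (3*i+1)\<close> by simp
  moreover have "d_min \<le> t (3*i+2) - t (3*i+1)"
    using coming_long \<open>seq_index K (3*i+2)\<close> by blast
  moreover have "t (3*i+2) < t (3*i+3)"
    using t_less_Suc[of "3*i+2"] \<open>seq_index K (3*i+3)\<close> by (simp add: numeral_3_eq_3)
  moreover have "real i * d_min \<le> t (3*i)"
    using Suc.IH \<open>seq_index K (3*i)\<close> by blast
  ultimately show ?case by (simp add: algebra_simps)
qed (simp add: t_0)

lemma t_unbounded:
  assumes "K = None"
  shows "\<exists>n. u < t n"
proof -
  obtain i where "u / d_min < real i" using reals_Archimedean2 by blast
  then have "u < real i * d_min" using d_min_pos by (simp add: pos_divide_less_eq)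
  also have "\<dots> \<le> t (3*i)" using t_growth assms by (simp add: seq_index_def)
  finally show ?thesis by blast
qed

lemma threshold_index:
  assumes "\<not> A (t 0)" "K = None \<Longrightarrow> \<exists>n. A (t n)"
  obtains j where "seq_index K j" "\<not> A (t j)" "seq_index K (Suc j) \<Longrightarrow> A (t (Suc j))"
proof (cases "\<exists>k. K = Some k \<and> \<not> A (t k)")
  case True
  then obtain k where "K = Some k" "\<not> A (t k)" by blast
  then show ?thesis by (intro that[of k]) (auto simp: seq_index_def)
next
  case False
  then obtain n where "seq_index K n" "A (t n)"
    using assms(2) by (cases K) (auto simp: seq_index_def)
  then obtain k where "k < n" "\<not> A (t k)" "A (t (Suc k))"
    using ex_least_nat_less[of "\<lambda>i. A (t i)" n] assms(1) by blast
  then show ?thesis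
    using seq_index_le[OF \<open>seq_index K n\<close>, of k] by (intro that[of k]) simp_all
qed

definition index_at :: "real \<Rightarrow> nat" where
  "index_at u = (GREATEST j. seq_index K j \<and> t j \<le> u)"

definition index_before :: "real \<Rightarrow> nat" where
  "index_before u = (GREATEST j. seq_index K j \<and> (j = 0 \<or> t j < u))"

lemma index_at_eqI:
  assumes "seq_index K j" "t j \<le> u" "seq_index K (Suc j) \<Longrightarrow> u < t (Suc j)"
  shows "index_at u = j"
  unfolding index_at_def
proof (rule Greatest_equality)
  fix i assume i: "seq_index K i \<and> t i \<le> u"
  show "i \<le> j"
  proof (rule ccontr)
    assume "\<not> i \<le> j"
    then have "seq_index K (Suc j)" "t (Suc j) \<le> t i"
      using i seq_index_le[of i "Suc j"] t_mono[of i "Suc j"] by simp_all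
    then show False using i assms(3) by simp
  qed
qed (use assms in simp)

lemma index_before_eqI:
  assumes "seq_index K j" "j = 0 \<or> t j < u" "seq_index K (Suc j) \<Longrightarrow> u \<le> t (Suc j)"
  shows "index_before u = j"
  unfolding index_before_def
proof (rule Greatest_equality)
  fix i assume i: "seq_index K i \<and> (i = 0 \<or> t i < u)"
  show "i \<le> j"
  proof (rule ccontr)
    assume "\<not> i \<le> j"
    then have "i \<noteq> 0" "seq_index K (Suc j)" "t (Suc j) \<le> t i"
      using i seq_index_le[of i "Suc j"] t_mono[of i "Suc j"] by simp_all
    then show False using i assms(3) by simp
  qed
qed (use assms in simp)

lemma index_at:
  assumes "0 \<le> u"
  shows "seq_index K (index_at u)" "t (index_at u) \<le> u"
    "seq_index K (Suc (index_at u)) \<Longrightarrow> u < t (Suc (index_at u))"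
proof -
  obtain j where "seq_index K j" "\<not> u < t j" "seq_index K (Suc j) \<Longrightarrow> u < t (Suc j)"
    by (rule threshold_index[of "\<lambda>r. u < r"]) (use assms t_0 t_unbounded in auto)
  with index_at_eqI[of j u] show "seq_index K (index_at u)" "t (index_at u) \<le> u"
    "seq_index K (Suc (index_at u)) \<Longrightarrow> u < t (Suc (index_at u))" by simp_all
qed

lemma index_before:
  assumes "0 < u"
  shows "seq_index K (index_before u)" "t (index_before u) < u"
    "seq_index K (Suc (index_before u)) \<Longrightarrow> u \<le> t (Suc (index_before u))"
proof -
  have unbounded: "\<exists>n. u \<le> t n" if "K = None"
    using t_unbounded[OF that, of u] by (meson less_imp_le)
  obtain j where "seq_index K j" "\<not> u \<le> t j" "seq_index K (Suc j) \<Longrightarrow> u \<le> t (Suc j)"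
    by (rule threshold_index[of "\<lambda>r. u \<le> r"]) (use assms t_0 unbounded in auto)
  with index_before_eqI[of j u] show "seq_index K (index_before u)"
    "t (index_before u) < u" "seq_index K (Suc (index_before u)) \<Longrightarrow> u \<le> t (Suc (index_before u))"
    by simp_all
qed

lemma status_eq_phase:
  assumes "0 \<le> u"
  shows "st u = phase (index_at u)"
proof (cases "seq_index K (Suc (index_at u))")
  case True
  then show ?thesis using index_at[OF assms] status_between by simp
next
  case False
  then obtain k where "K = Some k" "index_at u = k"
    using index_at(1)[OF assms] by (cases K) (auto simp: seq_index_def)
  then show ?thesis
    using last_dvd empty_after_last index_at(2)[OF assms] by (auto simp: phase_def)
qed

lemma index_eventually_right:
  assumes "0 \<le> u"
  shows "\<forall>\<^sub>F s in at_right u. index_at s = index_at u \<and> index_before s = index_at u"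
proof -
  let ?j = "index_at u"
  have "\<forall>\<^sub>F s in at_right u. u < s \<and> (seq_index K (Suc ?j) \<longrightarrow> s < t (Suc ?j))"
  proof (cases "seq_index K (Suc ?j)")
    case True
    then show ?thesis
      using index_at(3)[OF assms] by (intro eventually_at_rightI[of u "t (Suc ?j)"]) auto
  qed (simp add: eventually_at_right_less)
  then show ?thesis
  proof eventually_elim
    case (elim s)
    then show ?case
      using index_at[OF assms] by (auto intro!: index_at_eqI index_before_eqI)
  qed
qed

lemma index_eventually_left:
  assumes "0 < u"
  shows "\<forall>\<^sub>F s in at_left u. index_at s = index_before u \<and> index_before s = index_before u"
proof -
  let ?j = "index_before u"
  have "\<forall>\<^sub>F s in at_left u. t ?j < s \<and> s < u"
    using index_before(2)[OF assms] by (intro eventually_at_leftI[of "t ?j" u]) auto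
  then show ?thesis
  proof eventually_elim
    case (elim s)
    then show ?case
      using index_before[OF assms] by (auto intro!: index_at_eqI index_before_eqI)
  qed
qed

text \<open>During the Coming and Incrossing phases of the \<open>i\<close>-th train the deadline is the one set
  when it became Coming, at \<open>t (3*i+1)\<close>. The deadline in the state at time \<open>u\<close> is that of the
  phase in force just before \<open>u\<close>, since the Controller's updates take effect only after \<open>u\<close>.\<close>

definition phase_deadline :: "nat \<Rightarrow> xreal" where
  "phase_deadline j = (if 3 dvd j then Infty else Fin (t (3 * (j div 3) + 1) + W))"

definition deadline :: "real \<Rightarrow> xreal" where
  "deadline u = phase_deadline (index_before u)"

lemma next_deadline_same_phase: "next_deadline W (phase j) (phase_deadline j) u = phase_deadline j"
  by (auto simp: next_deadline_def phase_def phase_deadline_def dvd_eq_mod_eq_0)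

lemma next_deadline_new_phase:
  "next_deadline W (phase (Suc j)) (phase_deadline j) (t (Suc j)) = phase_deadline (Suc j)"
proof -
  have "\<exists>i. j = 3*i \<or> j = 3*i+1 \<or> j = 3*i+2" by presburger
  then obtain i where "j = 3*i \<or> j = 3*i+1 \<or> j = 3*i+2" by blast
  then show ?thesis
    by (auto simp: next_deadline_def phase_def phase_deadline_def mod_Suc div_Suc dvd_eq_mod_eq_0)
qed

lemma deadline_next:
  assumes "0 \<le> u"
  shows "next_deadline W (st u) (deadline u) u = phase_deadline (index_at u)"
proof (cases "index_at u = 0 \<or> t (index_at u) < u")
  case True
  then have "index_before u = index_at u"
    using index_at[OF assms] by (intro index_before_eqI) auto
  then show ?thesis
    using next_deadline_same_phase status_eq_phase[OF assms] by (simp add: deadline_def)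
next
  case False
  then obtain j where j: "index_at u = Suc j" "t (Suc j) = u"
    using index_at(2)[OF assms] by (cases "index_at u") auto
  then have "index_before u = j"
    using index_at(1)[OF assms] t_less_Suc[of j] seq_index_le[of "Suc j" j]
    by (intro index_before_eqI) auto
  then show ?thesis
    using next_deadline_new_phase[of j] status_eq_phase[OF assms] j by (simp add: deadline_def)
qed

lemma deadline_eventually_right:
  assumes "0 \<le> u"
  shows "\<forall>\<^sub>F s in at_right u. st s = st u \<and> deadline s = next_deadline W (st u) (deadline u) u"
  using index_eventually_right[OF assms] eventually_at_right_less[of u]
proof eventually_elim
  case (elim s)
  then have "0 \<le> s" using assms by simp
  with elim show ?case
    using status_eq_phase[of s] status_eq_phase[OF assms] deadline_next[OF assms]
    by (simp add: deadline_def)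
qed

lemma deadline_eventually_left:
  assumes "0 < u"
  shows "\<forall>\<^sub>F s in at_left u. st s = phase (index_before u) \<and> deadline s = deadline u"
  using index_eventually_left[OF assms] eventually_at_left_real[OF assms]
proof eventually_elim
  case (elim s)
  then show ?case using status_eq_phase[of s] by (simp add: deadline_def)
qed

lemma deadline_nonpos:
  assumes "u \<le> 0"
  shows "deadline u = Infty"
proof -
  have "index_before u = 0"
    using assms t_less_Suc[of 0] t_0 by (intro index_before_eqI) auto
  then show ?thesis by (simp add: deadline_def phase_deadline_def)
qed

lemma status_0: "st 0 = Empty"
  using t_less_Suc[of 0] t_0 status_eq_phase[of 0]
  by (simp add: index_at_eqI[of 0 0] phase_def)

lemma status_coming_if_deadline_now:
  assumes "deadline u = Fin u"
  shows "st u = Coming"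
proof -
  have "0 < u" using assms deadline_nonpos by (cases "u \<le> 0") auto
  define j where "j = index_before u"
  define i where "i = j div 3"
  have "\<not> 3 dvd j" and u: "u = t (3*i+1) + W"
    using assms unfolding deadline_def phase_deadline_def j_def i_def by (auto split: if_splits)
  then have "3*i+1 \<le> j" "3*i+2 \<le> Suc j" unfolding i_def by presburger+
  have "seq_index K j" using index_before(1)[OF \<open>0 < u\<close>] unfolding j_def .
  then have "seq_index K (3*i+2)" "t (3*i+1) \<le> t j"
    using seq_index_le[OF seq_index_Suc \<open>3*i+2 \<le> Suc j\<close>] t_mono \<open>3*i+1 \<le> j\<close> \<open>\<not> 3 dvd j\<close>
    by simp_all
  moreover have "t j < u" using index_before(2)[OF \<open>0 < u\<close>] unfolding j_def .
  moreover have "u < t (3*i+2)"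
    using coming_long[of i] \<open>seq_index K (3*i+2)\<close> u W_less_d_min by simp
  ultimately show ?thesis using coming[of i u] by simp
qed

end

lemma train_motion_tracks:
  assumes "train_motion d_min d_max P" "0 < d_min" "W < d_min"
  shows "\<exists>T KK. \<forall>x. track_motion (T x) (KK x) (\<lambda>u. P u x) W d_min"
proof -
  have "\<exists>t K. track_motion t K (\<lambda>u. P u x) W d_min" for x
    using assms(1)[unfolded train_motion_def Let_def, rule_format, of x, folded seq_index_def]
    apply (elim exE conjE)
    subgoal for t K
      by (intro exI[of _ t] exI[of _ K], unfold_locales) (use assms(2,3) in blast)+
    done
  then show ?thesis by metis
qed

section \<open>The run of the Controller\<close>

definition latched :: "(real \<Rightarrow> bool) \<Rightarrow> (real \<Rightarrow> bool) \<Rightarrow> real \<Rightarrow> bool" where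
  "latched trig hold u = (\<exists>s. 0 \<le> s \<and> s < u \<and> trig s \<and> (\<forall>v. s < v \<and> v < u \<longrightarrow> hold v))"

lemma latched_eventually_right:
  assumes "0 \<le> u" "\<forall>\<^sub>F s in at_right u. \<not> trig s"
    and "trig u \<or> hold u \<Longrightarrow> \<forall>\<^sub>F s in at_right u. hold s"
  shows "\<forall>\<^sub>F s in at_right u. latched trig hold s \<longleftrightarrow> trig u \<or> latched trig hold u \<and> hold u"
proof -
  have "\<forall>\<^sub>F s in at_right u. trig u \<or> hold u \<longrightarrow> hold s"
    using assms(3) by (cases "trig u \<or> hold u") simp_all
  with assms(2) have "\<forall>\<^sub>F s in at_right u. \<not> trig s \<and> (trig u \<or> hold u \<longrightarrow> hold s)"
    by (rule eventually_conj)
  then obtain e where "e > 0"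
    and near: "\<And>s. u < s \<Longrightarrow> s < u + e \<Longrightarrow> \<not> trig s \<and> (trig u \<or> hold u \<longrightarrow> hold s)"
    unfolding eventually_at_right_iff_interval by blast
  have "latched trig hold s \<longleftrightarrow> trig u \<or> latched trig hold u \<and> hold u"
    if "u < s" "s < u + e" for s
  proof
    assume "latched trig hold s"
    then obtain s0 where s0: "0 \<le> s0" "s0 < s" "trig s0" "\<forall>v. s0 < v \<and> v < s \<longrightarrow> hold v"
      unfolding latched_def by blast
    have "s0 \<le> u"
    proof (rule ccontr)
      assume "\<not> s0 \<le> u"
      then show False using near[of s0] s0 that by simp
    qed
    then show "trig u \<or> latched trig hold u \<and> hold u"
      using s0 that unfolding latched_def by (cases "s0 = u") auto
  next
    assume asm: "trig u \<or> latched trig hold u \<and> hold u"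
    then have "trig u \<or> hold u" by blast
    obtain s0 where s0: "0 \<le> s0" "s0 \<le> u" "trig s0" "\<forall>v. s0 < v \<and> v \<le> u \<longrightarrow> hold v"
    proof (cases "trig u")
      case True
      show thesis by (rule that[of u]) (use True assms(1) in auto)
    next
      case False
      then obtain s0 where "0 \<le> s0" "s0 < u" "trig s0" "\<forall>v. s0 < v \<and> v < u \<longrightarrow> hold v" "hold u"
        using asm unfolding latched_def by blast
      then show thesis using that[of s0] by (auto simp: le_less)
    qed
    have "hold v" if "s0 < v" "v < s" for v
      using s0(4) near[of v] \<open>trig u \<or> hold u\<close> that \<open>s < u + e\<close> by (cases "v \<le> u") auto
    then show "latched trig hold s"
      using s0 \<open>u < s\<close> unfolding latched_def by (intro exI[of _ s0]) auto
  qed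
  then show ?thesis
    unfolding eventually_at_right_iff_interval using \<open>e > 0\<close> by blast
qed

lemma latched_eventually_left:
  assumes "\<forall>\<^sub>F s in at_left u. \<not> trig s" "\<forall>\<^sub>F s in at_left u. hold s = b"
  shows "\<forall>\<^sub>F s in at_left u. latched trig hold s \<longleftrightarrow> latched trig hold u"
proof -
  have "\<forall>\<^sub>F s in at_left u. \<not> trig s \<and> hold s = b"
    using assms by (rule eventually_conj)
  then obtain e where "e > 0" and near: "\<And>s. u - e < s \<Longrightarrow> s < u \<Longrightarrow> \<not> trig s \<and> hold s = b"
    unfolding eventually_at_left_iff_interval by blast
  have "latched trig hold s \<longleftrightarrow> latched trig hold u" if "u - e < s" "s < u" for s
  proof
    assume "latched trig hold s"
    then obtain s0 where s0: "0 \<le> s0" "s0 < s" "trig s0" "\<forall>v. s0 < v \<and> v < s \<longrightarrow> hold v"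
      unfolding latched_def by blast
    define p where "p = (max s0 (u - e) + s) / 2"
    have "s0 < p" "p < s" "u - e < p" using that s0 unfolding p_def by auto
    then have b using near[of p] s0(4) that by auto
    have "hold v" if "s0 < v" "v < u" for v
      using near[of v] s0(4) \<open>b\<close> \<open>u - e < s\<close> that by (cases "v < s") auto
    then have "\<forall>v. s0 < v \<and> v < u \<longrightarrow> hold v" by blast
    then show "latched trig hold u" using s0 that unfolding latched_def by auto
  next
    assume "latched trig hold u"
    then obtain s0 where s0: "0 \<le> s0" "s0 < u" "trig s0" "\<forall>v. s0 < v \<and> v < u \<longrightarrow> hold v"
      unfolding latched_def by blast
    have "s0 \<le> u - e"
    proof (rule ccontr)
      assume "\<not> s0 \<le> u - e"
      then show False using near[of s0] s0 by simp
    qed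
    then show "latched trig hold s" using s0 that unfolding latched_def by auto
  qed
  then show ?thesis
    unfolding eventually_at_left_iff_interval using \<open>e > 0\<close> by blast
qed

lemma eventually_Fin_neq: "\<forall>\<^sub>F s in at u within A. Fin s \<noteq> c"
  by (cases c) (auto intro: eventually_mono[OF eventually_neq_at_within])

lemma xless_eventually_const_left:
  "\<exists>b. \<forall>\<^sub>F s in at_left u. xless (Fin (s + d)) c = b"
proof (cases c)
  case (Fin r)
  show ?thesis
  proof (cases "u + d \<le> r")
    case True
    then have "\<forall>\<^sub>F s in at_left u. xless (Fin (s + d)) c = True"
      using Fin by (intro eventually_at_leftI[of "u - 1"]) auto
    then show ?thesis by blast
  next
    case False
    then have "\<forall>\<^sub>F s in at_left u. xless (Fin (s + d)) c = False"
      using Fin by (intro eventually_at_leftI[of "r - d"]) auto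
    then show ?thesis by blast
  qed
qed auto

locale controller_construction =
  fixes P :: "real \<Rightarrow> 'tr::finite \<Rightarrow> tstatus" and T :: "'tr \<Rightarrow> nat \<Rightarrow> real"
    and KK :: "'tr \<Rightarrow> nat option" and W d_min d_open :: real and dir0 :: dirv
  assumes tracks: "\<And>x. track_motion (T x) (KK x) (\<lambda>u. P u x) W d_min"
    and d_open_pos: "0 < d_open"
begin

definition deadlines :: "real \<Rightarrow> 'tr \<Rightarrow> xreal" where
  "deadlines u x = track_motion.deadline (T x) (KK x) W u"

definition triggered :: "real \<Rightarrow> bool" where
  "triggered u = (\<exists>x. deadlines u x = Fin u)"

definition unsafe :: "real \<Rightarrow> bool" where
  "unsafe u = (\<exists>x. P u x \<noteq> Empty \<and> \<not> xless (Fin (u + d_open)) (deadlines u x))"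

text \<open>The initial direction \<open>dir0\<close> is irrelevant after time \<open>0\<close>: it is safe to open then.\<close>

definition run :: "real \<Rightarrow> 'tr st1" where
  "run u = \<lparr>ts = P u, dl = deadlines u,
     dr = if u = 0 then dir0 else if latched triggered unsafe u then DClose else DOpen\<rparr>"

lemma ts_run [simp]: "ts (run u) = P u" and dl_run [simp]: "dl (run u) = deadlines u"
  by (simp_all add: run_def)

lemma safe_to_open_run: "safe_to_open d_open (run u) u \<longleftrightarrow> \<not> unsafe u"
  by (auto simp: safe_to_open_def unsafe_def run_def)

lemma triggered_imp_unsafe:
  assumes "triggered u"
  shows "unsafe u"
proof -
  obtain x where "deadlines u x = Fin u" using assms unfolding triggered_def by blast
  moreover from this have "P u x = Coming"
    using track_motion.status_coming_if_deadline_now[OF tracks] unfolding deadlines_def by blast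
  ultimately show ?thesis using d_open_pos unfolding unsafe_def by (intro exI[of _ x]) simp
qed

lemma deadlines_0: "deadlines 0 x = Infty"
  using track_motion.deadline_nonpos[OF tracks] by (simp add: deadlines_def)

lemma not_unsafe_0: "\<not> unsafe 0"
  using track_motion.status_0[OF tracks] by (simp add: unsafe_def)

lemma not_triggered_0: "\<not> triggered 0"
  using triggered_imp_unsafe not_unsafe_0 by blast

lemma tracks_eventually_right:
  assumes "0 \<le> u"
  shows "\<forall>\<^sub>F s in at_right u. \<forall>x. P s x = P u x \<and>
    deadlines s x = next_deadline W (P u x) (deadlines u x) u \<and> deadlines s x \<noteq> Fin s"
proof (rule eventually_all_finite)
  fix x
  show "\<forall>\<^sub>F s in at_right u. P s x = P u x \<and>
    deadlines s x = next_deadline W (P u x) (deadlines u x) u \<and> deadlines s x \<noteq> Fin s"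
    using track_motion.deadline_eventually_right[OF tracks assms, of x]
      eventually_Fin_neq[where c = "next_deadline W (P u x) (deadlines u x) u"]
    by eventually_elim (auto simp: deadlines_def)
qed

lemma unsafe_eventually_right:
  assumes "0 \<le> u" "unsafe u"
  shows "\<forall>\<^sub>F s in at_right u. unsafe s"
proof -
  obtain x where x: "P u x \<noteq> Empty" "\<not> xless (Fin (u + d_open)) (deadlines u x)"
    using assms(2) unfolding unsafe_def by blast
  then obtain r where r: "deadlines u x = Fin r" "r \<le> u + d_open"
    by (cases "deadlines u x") auto
  with x have next_r: "next_deadline W (P u x) (deadlines u x) u = Fin r"
    by (simp add: next_deadline_def)
  show ?thesis
    using tracks_eventually_right[OF assms(1)] eventually_at_right_less[of u]
  proof eventually_elim
    case (elim s)
    then have "P s x \<noteq> Empty" "deadlines s x = Fin r" using x next_r by auto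
    then show ?case using r \<open>u < s\<close> unfolding unsafe_def by (intro exI[of _ x]) simp
  qed
qed

lemma run_eventually_right:
  assumes "0 \<le> u"
  shows "\<forall>\<^sub>F s in at_right u. run s = ctrl_exec W d_open (run u) u"
proof -
  have not_triggered: "\<forall>\<^sub>F s in at_right u. \<not> triggered s"
    using tracks_eventually_right[OF assms] unfolding triggered_def by eventually_elim blast
  have latched_right: "\<forall>\<^sub>F s in at_right u. latched triggered unsafe s \<longleftrightarrow>
      triggered u \<or> latched triggered unsafe u \<and> unsafe u"
    using assms not_triggered triggered_imp_unsafe unsafe_eventually_right
    by (intro latched_eventually_right) auto
  have exec: "ctrl_exec W d_open (run u) u = (run u)\<lparr>
      dl := \<lambda>x. next_deadline W (P u x) (deadlines u x) u,
      dr := if triggered u then DClose else if \<not> unsafe u then DOpen else dr (run u)\<rparr>"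
  proof -
    have "\<not> ((\<exists>x. dl (run u) x = Fin u) \<and> dr (run u) = DClose \<and> safe_to_open d_open (run u) u)"
      using triggered_imp_unsafe[of u] by (auto simp: safe_to_open_run triggered_def)
    then show ?thesis by (simp add: ctrl_exec_eq safe_to_open_run triggered_def)
  qed
  show ?thesis
    using latched_right tracks_eventually_right[OF assms] eventually_at_right_less[of u]
  proof eventually_elim
    case (elim s)
    have "\<not> latched triggered unsafe 0" by (simp add: latched_def)
    then have "dr (run s) = (if triggered u then DClose else if \<not> unsafe u then DOpen else dr (run u))"
      using elim(1,3) assms not_triggered_0 not_unsafe_0 by (cases "u = 0") (auto simp: run_def)
    then show ?case using elim(2,3) exec by (auto intro!: st1.equality)
  qed
qed

lemma run_eventually_left:
  assumes "0 < u"
  shows "\<exists>p. \<forall>\<^sub>F s in at_left u. run s = (run u)\<lparr>ts := p\<rparr>"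
proof -
  define p where "p x = phase (track_motion.index_before (T x) (KK x) u)" for x
  have "\<forall>x. \<exists>b. \<forall>\<^sub>F s in at_left u. xless (Fin (s + d_open)) (deadlines u x) = b"
    using xless_eventually_const_left by blast
  then obtain b where b: "\<And>x. \<forall>\<^sub>F s in at_left u. xless (Fin (s + d_open)) (deadlines u x) = b x"
    unfolding choice_iff by blast
  have tracks_left: "\<forall>\<^sub>F s in at_left u. \<forall>x. P s x = p x \<and> deadlines s x = deadlines u x \<and>
      deadlines u x \<noteq> Fin s \<and> xless (Fin (s + d_open)) (deadlines u x) = b x"
  proof (rule eventually_all_finite)
    fix x
    show "\<forall>\<^sub>F s in at_left u. P s x = p x \<and> deadlines s x = deadlines u x \<and>
      deadlines u x \<noteq> Fin s \<and> xless (Fin (s + d_open)) (deadlines u x) = b x"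
      using b[of x] track_motion.deadline_eventually_left[OF tracks assms, of x]
        eventually_Fin_neq[where c = "deadlines u x" and u = u and A = "{..<u}"]
      unfolding deadlines_def p_def by eventually_elim auto
  qed
  have "\<forall>\<^sub>F s in at_left u. \<not> triggered s"
    using tracks_left unfolding triggered_def by eventually_elim simp
  moreover have "\<forall>\<^sub>F s in at_left u. unsafe s = (\<exists>x. p x \<noteq> Empty \<and> \<not> b x)"
    using tracks_left by eventually_elim (auto simp: unsafe_def)
  ultimately have "\<forall>\<^sub>F s in at_left u. latched triggered unsafe s \<longleftrightarrow> latched triggered unsafe u"
    by (rule latched_eventually_left)
  with tracks_left eventually_at_left_real[OF assms]
  have "\<forall>\<^sub>F s in at_left u. run s = (run u)\<lparr>ts := p\<rparr>"
    by eventually_elim (use assms in \<open>auto simp: run_def fun_eq_iff\<close>)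
  then show ?thesis by blast
qed

lemma run_pre_run: "pre_run run"
proof (rule pre_runI)
  show "\<exists>v. \<forall>\<^sub>F s in at_right t. run s = v" if "0 \<le> t" for t
    using run_eventually_right[OF that] by blast
  show "\<exists>v. \<forall>\<^sub>F s in at_left t. run s = v" if "0 < t" for t
    using run_eventually_left[OF that] by blast
qed

lemma run_right_val: "0 \<le> u \<Longrightarrow> right_val run u = ctrl_exec W d_open (run u) u"
  by (rule right_val_eqI) (rule run_eventually_right)

lemma run_is_ctrl_run: "is_ctrl_run W d_open run"
  unfolding is_ctrl_run_def
proof (intro conjI allI impI)
  show "pre_run run" by (rule run_pre_run)
  show "right_val run t = ctrl_exec W d_open (run t) t" "ts (right_val run t) = ts (run t)"
    if "0 \<le> t" for t
    using run_right_val[OF that] by simp_all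
  fix t :: real assume "0 < t"
  then obtain p where "left_val run t = (run t)\<lparr>ts := p\<rparr>"
    using run_eventually_left left_val_eqI by metis
  then show "dl (run t) = dl (left_val run t)" "dr (run t) = dr (left_val run t)" by simp_all
qed

lemma run_immediate: "ctrl_immediate W d_open run"
  unfolding ctrl_immediate_def using run_right_val by blast

end

theorem mainTheorem16:
  fixes d_close d_open d_min d_max :: real
    and P :: "real \<Rightarrow> ('tr::finite) \<Rightarrow> tstatus"
    and A :: "'tr stfull"
  assumes "0 < d_close" and "0 < d_open" and "0 < d_min" and "0 < d_max"
    and "d_close < d_min" and "d_min \<le> d_max"
    and "pre_run P"
    and "train_motion d_min d_max P"
    and "initial_state A"
    and "ts A = P 0" and "ct A = 0"
  shows "\<exists>Q. (is_ctrl_run (d_min - d_close) d_open Q \<and> Q 0 = st1.truncate A \<and>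
              (\<forall>t\<ge>0. ts (Q t) = P t) \<and> ctrl_immediate (d_min - d_close) d_open Q) \<and>
            (\<forall>Q'. is_ctrl_run (d_min - d_close) d_open Q' \<and> Q' 0 = st1.truncate A \<and>
              (\<forall>t\<ge>0. ts (Q' t) = P t) \<and> ctrl_immediate (d_min - d_close) d_open Q'
              \<longrightarrow> (\<forall>t\<ge>0. Q' t = Q t))"
proof -
  \<comment> \<open>\<open>pre_run P\<close> follows from Train Motion.\<close>
  define W where "W = d_min - d_close"
  have "W < d_min" using assms(1) unfolding W_def by simp
  then obtain T KK where "\<And>x. track_motion (T x) (KK x) (\<lambda>u. P u x) W d_min"
    using train_motion_tracks[OF assms(8,3)] by blast
  then interpret controller_construction P T KK W d_min d_open "dr A"
    using assms(2) by (simp add: controller_construction_def)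
  have "run 0 = st1.truncate A"
    using assms(9,10) deadlines_0 by (auto simp: run_def st1.truncate_def initial_state_def)
  then have "is_ctrl_run W d_open run \<and> run 0 = st1.truncate A \<and> (\<forall>t\<ge>0. ts (run t) = P t) \<and>
      ctrl_immediate W d_open run"
    using run_is_ctrl_run run_immediate by simp
  moreover have "\<forall>t\<ge>0. Q' t = run t"
    if "is_ctrl_run W d_open Q'" "Q' 0 = st1.truncate A" "\<forall>t\<ge>0. ts (Q' t) = P t"
      "ctrl_immediate W d_open Q'" for Q'
    using that(2,3) \<open>run 0 = st1.truncate A\<close>
    by (auto intro: ctrl_run_unique[OF that(1,4) run_is_ctrl_run run_immediate])
  ultimately show ?thesis unfolding W_def[symmetric] by blast
qed

end
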